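(* Let $H$ be a bigraph. Every directed path in the condensation of $H^+$ has at most three vertices.
   Context: A bigraph is a bipartite graph $H$ with fixed bipartition $(B,W)$ (black/white colours). The pair-digraph $H^+$ has vertices all ordered pairs $(u,v)$ of distinct vertices of $H$, and arcs $(u,v)\to(u',v)$ whenever $u,v$ have the same colour, $uu'\in E(H)$, $vu'\notin E(H)$, and $(u,v)\to(u,v')$ whenever $u,v$ have different colours, $vv'\in E(H)$, $uv\notin E(H)$. The condensation of a digraph is obtained by contracting each strong component to a single vertex and deleting loops and multiple arcs. *)

theory Defs
  imports Main
begin

definition bigraph :: "'a set \<Rightarrow> 'a set \<Rightarrow> ('a \<Rightarrow> 'a \<Rightarrow> bool) \<Rightarrow> bool" where
  "bigraph B W E \<longleftrightarrow> finite (B \<union> W) \<and> B \<inter> W = {} \<and>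
     (\<forall>x y. E x y \<longrightarrow> E y x) \<and>
     (\<forall>x y. E x y \<longrightarrow> (x \<in> B \<and> y \<in> W) \<or> (x \<in> W \<and> y \<in> B))"

definition same_colour :: "'a set \<Rightarrow> 'a set \<Rightarrow> 'a \<Rightarrow> 'a \<Rightarrow> bool" where
  "same_colour B W u v \<longleftrightarrow> (u \<in> B \<and> v \<in> B) \<or> (u \<in> W \<and> v \<in> W)"

definition pair_vertices :: "'a set \<Rightarrow> 'a set \<Rightarrow> ('a \<times> 'a) set" where
  "pair_vertices B W = {(u, v). u \<in> B \<union> W \<and> v \<in> B \<union> W \<and> u \<noteq> v}"

definition pair_arcs :: "'a set \<Rightarrow> 'a set \<Rightarrow> ('a \<Rightarrow> 'a \<Rightarrow> bool) \<Rightarrow> (('a \<times> 'a) \<times> ('a \<times> 'a)) set" where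
  "pair_arcs B W E = {(p, q). p \<in> pair_vertices B W \<and> q \<in> pair_vertices B W \<and>
     ((\<exists>u v u'. p = (u, v) \<and> q = (u', v) \<and> same_colour B W u v \<and> E u u' \<and> \<not> E v u') \<or>
      (\<exists>u v v'. p = (u, v) \<and> q = (u, v') \<and> \<not> same_colour B W u v \<and> E v v' \<and> \<not> E u v))}"

definition strong_component :: "'v set \<Rightarrow> ('v \<times> 'v) set \<Rightarrow> 'v \<Rightarrow> 'v set" where
  "strong_component V A x = {y \<in> V. (x, y) \<in> A\<^sup>* \<and> (y, x) \<in> A\<^sup>*}"

definition cond_vertices :: "'v set \<Rightarrow> ('v \<times> 'v) set \<Rightarrow> 'v set set" where
  "cond_vertices V A = strong_component V A ` V"

definition cond_arcs :: "'v set \<Rightarrow> ('v \<times> 'v) set \<Rightarrow> ('v set \<times> 'v set) set" where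
  "cond_arcs V A = {(C, D). C \<in> cond_vertices V A \<and> D \<in> cond_vertices V A \<and> C \<noteq> D \<and>
      (\<exists>x\<in>C. \<exists>y\<in>D. (x, y) \<in> A)}"

definition dipath :: "'w set \<Rightarrow> ('w \<times> 'w) set \<Rightarrow> 'w list \<Rightarrow> bool" where
  "dipath V A ps \<longleftrightarrow> ps \<noteq> [] \<and> distinct ps \<and> set ps \<subseteq> V \<and>
     (\<forall>i. Suc i < length ps \<longrightarrow> (ps ! i, ps ! Suc i) \<in> A)"

end

theory Submission
  imports Defs
begin

(* General part: if an arc (x, y) of a digraph runs between two distinct strong
   components C1 -> C2 that are the middle of a condensation path C0 -> C1 -> C2 -> C3,
   then y does not reach x, x has an incoming arc (coming from C0 via C1) and y has an
   outgoing arc (leading to C3 via C2).  Hence, if every arc either lies on a cycle,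
   starts at a vertex without in-arcs, or ends at a vertex without out-arcs, the
   condensation has no path with four vertices.  (Having no in-arc, resp. no
   out-arc, is expressed as not lying in the Range, resp. Domain, of the arc set.)
   Bigraph part: every arc of H+ has this trichotomy property.  For an arc
   (u,v) -> (u',v) of the first kind, either some x is adjacent to v but not to u,
   and then (u',v) -> (u',x) -> (u,x) -> (u,v) closes a cycle, or N(v) is contained
   in N(u) and (u,v) has no in-arc; arcs of the second kind are handled dually,
   ending in a vertex without out-arcs. *)

lemma strong_component_reach:
  assumes "C \<in> cond_vertices V A" "x \<in> C" "y \<in> C"
  shows "(x, y) \<in> A\<^sup>*"
proof -
  obtain z where "C = strong_component V A z"
    using assms(1) by (auto simp: cond_vertices_def)
  then have "(x, z) \<in> A\<^sup>*" "(z, y) \<in> A\<^sup>*"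
    using assms(2,3) by (auto simp: strong_component_def)
  then show ?thesis by (rule rtrancl_trans)
qed

lemma strong_component_eqI:
  assumes "C \<in> cond_vertices V A" "D \<in> cond_vertices V A" "x \<in> C" "y \<in> D"
    and "(x, y) \<in> A\<^sup>*" "(y, x) \<in> A\<^sup>*"
  shows "C = D"
proof -
  obtain z w where C: "C = strong_component V A z" and D: "D = strong_component V A w"
    using assms(1,2) by (auto simp: cond_vertices_def)
  have "(z, x) \<in> A\<^sup>*" "(x, z) \<in> A\<^sup>*" "(w, y) \<in> A\<^sup>*" "(y, w) \<in> A\<^sup>*"
    using assms(3,4) C D by (auto simp: strong_component_def)
  then have "(z, w) \<in> A\<^sup>*" "(w, z) \<in> A\<^sup>*"
    using assms(5,6) by (meson rtrancl_trans)+
  then show ?thesis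
    unfolding C D strong_component_def by (meson rtrancl_trans)
qed

lemma cond_arc_target_in_Range:
  assumes "(C, D) \<in> cond_arcs V A" "x \<in> D"
  shows "x \<in> Range A"
proof -
  obtain a b where ab: "a \<in> C" "b \<in> D" "(a, b) \<in> A" and D: "D \<in> cond_vertices V A"
    using assms(1) by (auto simp: cond_arcs_def)
  have "(a, x) \<in> A\<^sup>+"
    using ab(3) strong_component_reach[OF D ab(2) assms(2)] by (rule rtrancl_into_trancl2)
  then show ?thesis by (auto elim: tranclE)
qed

lemma cond_arc_source_in_Domain:
  assumes "(C, D) \<in> cond_arcs V A" "x \<in> C"
  shows "x \<in> Domain A"
proof -
  obtain a b where ab: "a \<in> C" "b \<in> D" "(a, b) \<in> A" and C: "C \<in> cond_vertices V A"
    using assms(1) by (auto simp: cond_arcs_def)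
  have "(x, b) \<in> A\<^sup>+"
    using strong_component_reach[OF C assms(2) ab(1)] ab(3) by (rule rtrancl_into_trancl1)
  then show ?thesis by (auto elim: converse_tranclE)
qed

(* If each arc lies on a cycle, leaves a vertex without in-arcs or enters a vertex
   without out-arcs, then condensation paths have at most three vertices: the arc
   realising the middle condensation arc of a longer path would violate all three. *)
lemma cond_path_length_le_3:
  assumes trichotomy: "\<And>p q. (p, q) \<in> A \<Longrightarrow> (q, p) \<in> A\<^sup>* \<or> p \<notin> Range A \<or> q \<notin> Domain A"
    and path: "dipath (cond_vertices V A) (cond_arcs V A) ps"
  shows "length ps \<le> 3"
proof (rule ccontr)
  assume "\<not> length ps \<le> 3"
  then have arcs: "(ps!0, ps!1) \<in> cond_arcs V A" "(ps!1, ps!2) \<in> cond_arcs V A"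
      "(ps!2, ps!3) \<in> cond_arcs V A"
    using path unfolding dipath_def numeral_2_eq_2 numeral_3_eq_3 by auto
  obtain x y where xy: "x \<in> ps!1" "y \<in> ps!2" "(x, y) \<in> A" and distinct: "ps!1 \<noteq> ps!2"
    and comps: "ps!1 \<in> cond_vertices V A" "ps!2 \<in> cond_vertices V A"
    using arcs(2) by (auto simp: cond_arcs_def)
  have "(y, x) \<notin> A\<^sup>*"
    using strong_component_eqI[OF comps xy(1,2)] xy(3) distinct by blast
  moreover have "x \<in> Range A"
    using cond_arc_target_in_Range[OF arcs(1) xy(1)] .
  moreover have "y \<in> Domain A"
    using cond_arc_source_in_Domain[OF arcs(3) xy(2)] .
  ultimately show False
    using trichotomy[OF xy(3)] by blast
qed

lemma bigraph_sym: "bigraph B W E \<Longrightarrow> E x y \<Longrightarrow> E y x"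
  by (auto simp: bigraph_def)

lemma same_colour_iff:
  "bigraph B W E \<Longrightarrow> a \<in> B \<union> W \<Longrightarrow> b \<in> B \<union> W
    \<Longrightarrow> same_colour B W a b \<longleftrightarrow> (a \<in> B \<longleftrightarrow> b \<in> B)"
  unfolding bigraph_def same_colour_def by blast

lemma bigraph_adjacent:
  assumes "bigraph B W E" "E x y"
  shows "x \<in> B \<union> W" "y \<in> B \<union> W" "x \<in> B \<longleftrightarrow> y \<notin> B"
  using assms unfolding bigraph_def by blast+

lemma pair_arcsE:
  assumes "(p, q) \<in> pair_arcs B W E"
  obtains (same) u v u' where "p = (u, v)" "q = (u', v)" "same_colour B W u v" "E u u'" "\<not> E v u'"
    | (diff) u v v' where "p = (u, v)" "q = (u, v')" "\<not> same_colour B W u v" "E v v'" "\<not> E u v"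
  using assms unfolding pair_arcs_def by blast

lemma pair_arc_sameI:
  "(u, v) \<in> pair_vertices B W \<Longrightarrow> (u', v) \<in> pair_vertices B W \<Longrightarrow> same_colour B W u v
    \<Longrightarrow> E u u' \<Longrightarrow> \<not> E v u' \<Longrightarrow> ((u, v), (u', v)) \<in> pair_arcs B W E"
  unfolding pair_arcs_def by blast

lemma pair_arc_diffI:
  "(u, v) \<in> pair_vertices B W \<Longrightarrow> (u, v') \<in> pair_vertices B W \<Longrightarrow> \<not> same_colour B W u v
    \<Longrightarrow> E v v' \<Longrightarrow> \<not> E u v \<Longrightarrow> ((u, v), (u, v')) \<in> pair_arcs B W E"
  unfolding pair_arcs_def by blast

(* An arc (u,v) -> (u',v) of the first kind lies on a cycle, unless
   N(v) \<subseteq> N(u), in which case (u,v) has no in-arc. *)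
lemma same_colour_arc_trichotomy:
  assumes bg: "bigraph B W E"
    and arc: "((u, v), (u', v)) \<in> pair_arcs B W E"
    and sc: "same_colour B W u v" and uu': "E u u'" and vu': "\<not> E v u'"
  shows "((u', v), (u, v)) \<in> (pair_arcs B W E)\<^sup>* \<or> (u, v) \<notin> Range (pair_arcs B W E)"
proof -
  note adj = bigraph_adjacent[OF bg] and colour = same_colour_iff[OF bg]
  have uv: "u \<in> B \<union> W" "v \<in> B \<union> W" "u \<noteq> v" "u' \<noteq> v"
    using arc by (auto simp: pair_arcs_def pair_vertices_def)
  have uB: "u \<in> B \<longleftrightarrow> v \<in> B"
    using sc colour[OF uv(1,2)] by simp
  show ?thesis
  proof (cases "\<exists>x. E v x \<and> \<not> E u x")
    case True
    then obtain x where vx: "E v x" and ux: "\<not> E u x" by blast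
    have u'x: "u' \<in> B \<union> W" "x \<in> B \<union> W" "u' \<noteq> x" "u \<noteq> x"
      using adj(2)[OF uu'] adj(2)[OF vx] uu' ux adj(3)[OF vx] uB by auto
    have verts: "(u, v) \<in> pair_vertices B W" "(u', v) \<in> pair_vertices B W"
        "(u', x) \<in> pair_vertices B W" "(u, x) \<in> pair_vertices B W"
      using uv u'x by (auto simp: pair_vertices_def)
    have colours: "\<not> same_colour B W u' v" "same_colour B W u' x" "\<not> same_colour B W u x"
      using colour[OF u'x(1) uv(2)] colour[OF u'x(1,2)] colour[OF uv(1) u'x(2)]
        adj(3)[OF uu'] adj(3)[OF vx] uB by simp_all
    have "((u', v), (u', x)) \<in> pair_arcs B W E"
      using pair_arc_diffI[where E = E, OF verts(2,3) colours(1) vx] vu' bigraph_sym[OF bg] by blast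
    moreover have "((u', x), (u, x)) \<in> pair_arcs B W E"
      using pair_arc_sameI[where E = E, OF verts(3,4) colours(2)] uu' ux bigraph_sym[OF bg] by blast
    moreover have "((u, x), (u, v)) \<in> pair_arcs B W E"
      using pair_arc_diffI[where E = E, OF verts(4,1) colours(3)] vx ux bigraph_sym[OF bg] by blast
    ultimately show ?thesis
      by (meson converse_rtrancl_into_rtrancl r_into_rtrancl)
  next
    case False
    have "(r, (u, v)) \<notin> pair_arcs B W E" for r
    proof
      assume "(r, (u, v)) \<in> pair_arcs B W E"
      then show False
      proof (cases rule: pair_arcsE)
        case (same a b a')
        then have "a \<in> B \<longleftrightarrow> u \<notin> B" "a \<in> B \<longleftrightarrow> v \<in> B"
          using adj(3) colour[OF adj(1) uv(2)] by auto
        then show False using uB by blast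
      next
        case (diff a b b')
        then show False using False bigraph_sym[OF bg] by blast
      qed
    qed
    then show ?thesis by blast
  qed
qed

(* Dually, an arc (u,v) -> (u,v') of the second kind lies on a cycle, unless
   N(u) \<subseteq> N(v'), in which case (u,v') has no out-arc. *)
lemma diff_colour_arc_trichotomy:
  assumes bg: "bigraph B W E"
    and arc: "((u, v), (u, v')) \<in> pair_arcs B W E"
    and dc: "\<not> same_colour B W u v" and vv': "E v v'" and uv: "\<not> E u v"
  shows "((u, v'), (u, v)) \<in> (pair_arcs B W E)\<^sup>* \<or> (u, v') \<notin> Domain (pair_arcs B W E)"
proof -
  note adj = bigraph_adjacent[OF bg] and colour = same_colour_iff[OF bg]
  have in_H: "u \<in> B \<union> W" "v \<in> B \<union> W" "v' \<in> B \<union> W" "u \<noteq> v" "u \<noteq> v'"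
    using arc by (auto simp: pair_arcs_def pair_vertices_def)
  have uB: "u \<in> B \<longleftrightarrow> v' \<in> B"
    using dc colour[OF in_H(1,2)] adj(3)[OF vv'] by simp
  show ?thesis
  proof (cases "\<exists>x. E u x \<and> \<not> E v' x")
    case True
    then obtain x where ux: "E u x" and v'x: "\<not> E v' x" by blast
    have x: "x \<in> B \<union> W" "x \<noteq> v" "x \<noteq> v'"
      using adj(2)[OF ux] ux uv adj(3)[OF ux] uB by auto
    have verts: "(u, v) \<in> pair_vertices B W" "(u, v') \<in> pair_vertices B W"
        "(x, v') \<in> pair_vertices B W" "(x, v) \<in> pair_vertices B W"
      using in_H x by (auto simp: pair_vertices_def)
    have colours: "same_colour B W u v'" "\<not> same_colour B W x v'" "same_colour B W x v"
      using colour[OF in_H(1,3)] colour[OF x(1) in_H(3)] colour[OF x(1) in_H(2)]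
        adj(3)[OF ux] adj(3)[OF vv'] uB by simp_all
    have "((u, v'), (x, v')) \<in> pair_arcs B W E"
      using pair_arc_sameI[where E = E, OF verts(2,3) colours(1) ux v'x] .
    moreover have "((x, v'), (x, v)) \<in> pair_arcs B W E"
      using pair_arc_diffI[where E = E, OF verts(3,4) colours(2)] vv' v'x bigraph_sym[OF bg] by blast
    moreover have "((x, v), (u, v)) \<in> pair_arcs B W E"
      using pair_arc_sameI[where E = E, OF verts(4,1) colours(3)] ux uv bigraph_sym[OF bg] by blast
    ultimately show ?thesis
      by (meson converse_rtrancl_into_rtrancl r_into_rtrancl)
  next
    case False
    have "((u, v'), r) \<notin> pair_arcs B W E" for r
    proof
      assume "((u, v'), r) \<in> pair_arcs B W E"
      then show False
      proof (cases rule: pair_arcsE)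
        case (same a b a')
        then show False using False by blast
      next
        case (diff a b b')
        then show False using colour[OF in_H(1,3)] uB by simp
      qed
    qed
    then show ?thesis by blast
  qed
qed

lemma pair_arc_trichotomy:
  assumes bg: "bigraph B W E" and arc: "(p, q) \<in> pair_arcs B W E"
  shows "(q, p) \<in> (pair_arcs B W E)\<^sup>* \<or> p \<notin> Range (pair_arcs B W E)
    \<or> q \<notin> Domain (pair_arcs B W E)"
  using arc
proof (cases rule: pair_arcsE)
  case (same u v u')
  then show ?thesis using same_colour_arc_trichotomy[OF bg] arc by blast
next
  case (diff u v v')
  then show ?thesis using diff_colour_arc_trichotomy[OF bg] arc by blast
qed

theorem lemma2p8:
  fixes B W :: "'a set" and E :: "'a \<Rightarrow> 'a \<Rightarrow> bool" and ps :: "('a \<times> 'a) set list"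
  assumes "bigraph B W E"
    and "dipath (cond_vertices (pair_vertices B W) (pair_arcs B W E))
                (cond_arcs (pair_vertices B W) (pair_arcs B W E)) ps"
  shows "length ps \<le> 3"
  using cond_path_length_le_3[OF pair_arc_trichotomy[OF assms(1)] assms(2)] .

end
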